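(* Let $\mathbb{S}^1$ be a circle of perimeter $1$, let $P\subset\mathbb{S}^1$ be a finite point set containing a source $s$ with $|P|>2$, and let $\rho_{\mathrm{opt}}$ be an optimal range assignment for $P$ (for a fixed $\alpha>1$). Then $\rho_{\mathrm{opt}}(p)<\frac12$ for all $p\in P$.
   Context: Distance on $\mathbb{S}^1$ is arc length along the circle: $d(p,q)=\min(d_{\mathrm{cw}}(p,q),d_{\mathrm{ccw}}(p,q))$. A range assignment $\rho$ on $P$ induces a directed graph with edge $(p,q)$ iff $d(p,q)\le\rho(p)$; it is feasible if the graph contains an arborescence rooted at $s$ spanning $P$; its cost is $\sum_{p\in P}\rho(p)^\alpha$ with $\alpha>1$; an optimal assignment is a feasible one of minimum cost. *)

theory Defs
  imports Complex_Main
begin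

text \<open>The circle S^1 of perimeter 1 is modelled as the interval [0,1) (reals mod 1).
  Clockwise/counterclockwise arc lengths and the arc-length distance.\<close>

definition d_ccw :: "real \<Rightarrow> real \<Rightarrow> real" where
  "d_ccw p q = frac (q - p)"

definition d_cw :: "real \<Rightarrow> real \<Rightarrow> real" where
  "d_cw p q = frac (p - q)"

definition circ_dist :: "real \<Rightarrow> real \<Rightarrow> real" where
  "circ_dist p q = min (d_cw p q) (d_ccw p q)"

definition induced_edges :: "real set \<Rightarrow> (real \<Rightarrow> real) \<Rightarrow> (real \<times> real) set" where
  "induced_edges P rho = {(p, q). p \<in> P \<and> q \<in> P \<and> p \<noteq> q \<and> circ_dist p q \<le> rho p}"

definition spanning_arborescence :: "real set \<Rightarrow> real \<Rightarrow> (real \<times> real) set \<Rightarrow> bool" where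
  "spanning_arborescence P s T \<longleftrightarrow>
     s \<in> P \<and> T \<subseteq> P \<times> P \<and>
     (\<forall>q \<in> P - {s}. \<exists>!p. (p, q) \<in> T) \<and>
     (\<forall>p. (p, s) \<notin> T) \<and>
     (\<forall>q \<in> P. (s, q) \<in> T\<^sup>*)"

definition range_assignment :: "real set \<Rightarrow> (real \<Rightarrow> real) \<Rightarrow> bool" where
  "range_assignment P rho \<longleftrightarrow> (\<forall>p \<in> P. rho p \<ge> 0)"

definition feasible :: "real set \<Rightarrow> real \<Rightarrow> (real \<Rightarrow> real) \<Rightarrow> bool" where
  "feasible P s rho \<longleftrightarrow> range_assignment P rho \<and>
     (\<exists>T \<subseteq> induced_edges P rho. spanning_arborescence P s T)"

definition cost :: "real \<Rightarrow> real set \<Rightarrow> (real \<Rightarrow> real) \<Rightarrow> real" where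
  "cost \<alpha> P rho = (\<Sum>p \<in> P. rho p powr \<alpha>)"

definition optimal :: "real \<Rightarrow> real set \<Rightarrow> real \<Rightarrow> (real \<Rightarrow> real) \<Rightarrow> bool" where
  "optimal \<alpha> P s rho \<longleftrightarrow> feasible P s rho \<and>
     (\<forall>rho'. feasible P s rho' \<longrightarrow> cost \<alpha> P rho \<le> cost \<alpha> P rho')"

end

theory Submission imports Defs begin

text \<open>Suppose \<open>\<rho>(p) \<ge> 1/2\<close>. Let \<open>r\<close> be a point of \<open>P\<close> farthest from \<open>p\<close> among those
  different from \<open>p\<close> and from its antipode, and let \<open>m = d(p, r)\<close>, so \<open>0 < m < 1/2\<close>
  (here \<open>|P| > 2\<close> is used). Every point of \<open>P\<close> is then within distance \<open>m\<close> of \<open>p\<close>, or is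
  the antipode of \<open>p\<close> and hence within \<open>1/2 - m\<close> of \<open>r\<close>. Lowering \<open>\<rho>(p)\<close> to \<open>m\<close> and raising
  \<open>\<rho>(r)\<close> to at least \<open>1/2 - m\<close> keeps every vertex reachable from \<open>s\<close>, and by strict
  superadditivity of \<open>x\<^sup>\<alpha>\<close> it lowers the cost, because
  \<open>m\<^sup>\<alpha> + (1/2 - m)\<^sup>\<alpha> < (1/2)\<^sup>\<alpha> \<le> \<rho>(p)\<^sup>\<alpha>\<close>.\<close>

lemma powr_add_less_powr:
  fixes a b \<alpha> :: real
  assumes "0 < a" "0 < b" "1 < \<alpha>"
  shows "a powr \<alpha> + b powr \<alpha> < (a + b) powr \<alpha>"
proof -
  have split: "x powr \<alpha> = x * x powr (\<alpha> - 1)" if "0 < x" for x :: real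
    using that by (simp add: powr_mult_base)
  have "a powr \<alpha> + b powr \<alpha> = a * a powr (\<alpha> - 1) + b * b powr (\<alpha> - 1)"
    using assms by (simp add: split)
  also have "\<dots> < a * (a + b) powr (\<alpha> - 1) + b * (a + b) powr (\<alpha> - 1)"
    using assms by (intro add_strict_mono mult_strict_left_mono powr_less_mono2) auto
  also have "\<dots> = (a + b) powr \<alpha>"
    using assms split[of "a + b"] by (simp add: algebra_simps)
  finally show ?thesis .
qed

lemma frac_eq_if_abs_less_1:
  fixes u :: real
  assumes "\<bar>u\<bar> < 1"
  shows "frac u = (if 0 \<le> u then u else u + 1)"
proof (cases "0 \<le> u")
  case True
  then show ?thesis using assms by (simp add: frac_eq)
next
  case False
  then have "\<lfloor>u\<rfloor> = -1" using assms by (simp add: floor_eq_iff)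
  then show ?thesis using False by (simp add: frac_def)
qed

lemma circ_dist_eq:
  assumes "p \<in> {0..<1}" "q \<in> {0..<1}"
  shows "circ_dist p q = min \<bar>q - p\<bar> (1 - \<bar>q - p\<bar>)"
  using assms frac_eq_if_abs_less_1[of "q - p"] frac_eq_if_abs_less_1[of "p - q"]
  unfolding circ_dist_def d_cw_def d_ccw_def by (auto simp: min_def abs_if)

lemma circ_dist_le_half: "p \<in> {0..<1} \<Longrightarrow> q \<in> {0..<1} \<Longrightarrow> circ_dist p q \<le> 1/2"
  by (simp add: circ_dist_eq min_def abs_if)

lemma circ_dist_pos: "p \<in> {0..<1} \<Longrightarrow> q \<in> {0..<1} \<Longrightarrow> p \<noteq> q \<Longrightarrow> 0 < circ_dist p q"
  by (simp add: circ_dist_eq min_def abs_if)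

lemma antipode_unique:
  "p \<in> {0..<1} \<Longrightarrow> q \<in> {0..<1} \<Longrightarrow> x \<in> {0..<1} \<Longrightarrow>
   circ_dist p q = 1/2 \<Longrightarrow> circ_dist p x = 1/2 \<Longrightarrow> x = q"
  by (simp add: circ_dist_eq min_def abs_if split: if_splits)

lemma circ_dist_antipode:
  "p \<in> {0..<1} \<Longrightarrow> q \<in> {0..<1} \<Longrightarrow> r \<in> {0..<1} \<Longrightarrow>
   circ_dist p q = 1/2 \<Longrightarrow> circ_dist r q = 1/2 - circ_dist p r"
  by (simp add: circ_dist_eq min_def abs_if split: if_splits)

lemma exists_non_antipodal_point:
  assumes "P \<subseteq> {0..<1}" "p \<in> P" "card P > 2"
  shows "\<exists>x \<in> P. x \<noteq> p \<and> circ_dist p x \<noteq> 1/2"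
proof (rule ccontr)
  assume "\<not> ?thesis"
  then obtain q where "P \<subseteq> {p, q}"
    using antipode_unique assms(1,2) by blast
  then have "card P \<le> card {p, q}"
    by (intro card_mono) auto
  also have "\<dots> \<le> 2"
    by (simp add: card_insert_if)
  finally show False
    using assms(3) by simp
qed

lemma farthest_non_antipodal_point:
  assumes "finite P" "P \<subseteq> {0..<1}" "p \<in> P" "card P > 2"
  obtains r where "r \<in> P" "r \<noteq> p" "0 < circ_dist p r" "circ_dist p r < 1/2"
    and "\<And>x. x \<in> P \<Longrightarrow> circ_dist p x \<le> circ_dist p r \<or> circ_dist r x \<le> 1/2 - circ_dist p r"
proof -
  have unit: "x \<in> {0..<1}" if "x \<in> P" for x
    using that assms(2) by blast
  define N where "N = {x \<in> P. x \<noteq> p \<and> circ_dist p x \<noteq> 1/2}"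
  have "N \<noteq> {}"
    using exists_non_antipodal_point[OF assms(2-4)] unfolding N_def by blast
  moreover have "finite N"
    unfolding N_def using assms(1) by simp
  ultimately obtain r where r: "r \<in> N" and r_max: "\<And>x. x \<in> N \<Longrightarrow> circ_dist p x \<le> circ_dist p r"
    using Max_in[of "circ_dist p ` N"] Max_ge[of "circ_dist p ` N"] by fastforce
  show thesis
  proof
    show "r \<in> P" "r \<noteq> p"
      using r unfolding N_def by auto
    then show "0 < circ_dist p r" "circ_dist p r < 1/2"
      using r circ_dist_pos[OF unit unit] circ_dist_le_half[OF unit unit] assms(3)
      unfolding N_def by force+
    show "circ_dist p x \<le> circ_dist p r \<or> circ_dist r x \<le> 1/2 - circ_dist p r" if "x \<in> P" for x
    proof (cases "x \<in> N")
      case True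
      then show ?thesis using r_max by blast
    next
      case False
      then consider "x = p" | "circ_dist p x = 1/2"
        using \<open>x \<in> P\<close> unfolding N_def by blast
      then show ?thesis
      proof cases
        case 1
        then show ?thesis
          using \<open>0 < circ_dist p r\<close> circ_dist_eq[OF unit unit, of p p] assms(3) by simp
      next
        case 2
        then show ?thesis
          using circ_dist_antipode[OF unit unit unit, of p x r] assms(3) \<open>x \<in> P\<close> \<open>r \<in> P\<close> by simp
      qed
    qed
  qed
qed

definition hop_dist :: "('a \<times> 'a) set \<Rightarrow> 'a \<Rightarrow> 'a \<Rightarrow> nat" where
  "hop_dist E s x = (LEAST n. (s, x) \<in> E ^^ n)"

lemma relpow_hop_dist:
  assumes "(s, x) \<in> E\<^sup>*"
  shows "(s, x) \<in> E ^^ hop_dist E s x"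
proof -
  obtain n where "(s, x) \<in> E ^^ n"
    using assms by (blast dest: rtrancl_imp_relpow)
  then show ?thesis
    unfolding hop_dist_def by (rule LeastI)
qed

lemma hop_dist_predecessor:
  assumes "(s, x) \<in> E\<^sup>*" "x \<noteq> s"
  obtains y where "(y, x) \<in> E" "hop_dist E s y < hop_dist E s x"
proof -
  obtain n where n: "hop_dist E s x = Suc n"
    using relpow_hop_dist[OF assms(1)] assms(2) by (cases "hop_dist E s x") auto
  then obtain y where y: "(s, y) \<in> E ^^ n" "(y, x) \<in> E"
    using relpow_hop_dist[OF assms(1)] by auto
  have "hop_dist E s y \<le> n"
    unfolding hop_dist_def using y(1) by (rule Least_le)
  then show thesis
    using that y(2) n by simp
qed

lemma spanning_arborescence_if_reachable:
  assumes "E \<subseteq> P \<times> P" "s \<in> P" "\<forall>x \<in> P. (s, x) \<in> E\<^sup>*"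
  obtains T where "T \<subseteq> E" "spanning_arborescence P s T"
proof -
  define parent where
    "parent x = (SOME y. (y, x) \<in> E \<and> hop_dist E s y < hop_dist E s x)" for x
  have "\<exists>y. (y, x) \<in> E \<and> hop_dist E s y < hop_dist E s x" if "x \<in> P" "x \<noteq> s" for x
    using hop_dist_predecessor[of s x E] assms(3) that by metis
  then have parent: "(parent x, x) \<in> E" "hop_dist E s (parent x) < hop_dist E s x"
    if "x \<in> P" "x \<noteq> s" for x
    using that unfolding parent_def by (metis (no_types, lifting) someI_ex)+
  define T where "T = {(parent x, x) | x. x \<in> P \<and> x \<noteq> s}"
  have T_iff: "(y, x) \<in> T \<longleftrightarrow> x \<in> P \<and> x \<noteq> s \<and> y = parent x" for x y
    unfolding T_def by blast
  have "T \<subseteq> E"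
    using parent(1) T_iff by auto
  have "(s, x) \<in> T\<^sup>*" if "x \<in> P" for x
    using that
  proof (induction "hop_dist E s x" arbitrary: x rule: less_induct)
    case less
    show ?case
    proof (cases "x = s")
      case False
      then have "parent x \<in> P" "(s, parent x) \<in> T\<^sup>*"
        using less parent[OF less.prems] assms(1) by blast+
      then show ?thesis
        using T_iff less.prems False by (blast intro: rtrancl_into_rtrancl)
    qed simp
  qed
  then have "spanning_arborescence P s T"
    unfolding spanning_arborescence_def using assms(1,2) \<open>T \<subseteq> E\<close> T_iff by auto
  then show thesis
    using that \<open>T \<subseteq> E\<close> by blast
qed

lemma feasible_iff_reachable:
  assumes "s \<in> P"
  shows "feasible P s rho \<longleftrightarrow>
    range_assignment P rho \<and> (\<forall>x \<in> P. (s, x) \<in> (induced_edges P rho)\<^sup>*)"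
proof
  assume "feasible P s rho"
  then obtain T where "range_assignment P rho" "T \<subseteq> induced_edges P rho"
    and "spanning_arborescence P s T"
    unfolding feasible_def by blast
  moreover from \<open>T \<subseteq> induced_edges P rho\<close> have "T\<^sup>* \<subseteq> (induced_edges P rho)\<^sup>*"
    by (rule rtrancl_mono)
  ultimately show "range_assignment P rho \<and> (\<forall>x \<in> P. (s, x) \<in> (induced_edges P rho)\<^sup>*)"
    unfolding spanning_arborescence_def by blast
next
  assume reach: "range_assignment P rho \<and> (\<forall>x \<in> P. (s, x) \<in> (induced_edges P rho)\<^sup>*)"
  have "induced_edges P rho \<subseteq> P \<times> P"
    unfolding induced_edges_def by auto
  then obtain T where "T \<subseteq> induced_edges P rho" "spanning_arborescence P s T"
    using spanning_arborescence_if_reachable assms reach by metis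
  then show "feasible P s rho"
    using reach unfolding feasible_def by blast
qed

lemma feasible_if_edges_reachable:
  assumes "feasible P s rho" "range_assignment P rho'"
    and "induced_edges P rho \<subseteq> (induced_edges P rho')\<^sup>*"
  shows "feasible P s rho'"
proof -
  have "s \<in> P"
    using assms(1) unfolding feasible_def spanning_arborescence_def by blast
  have "(induced_edges P rho)\<^sup>* \<subseteq> (induced_edges P rho')\<^sup>*"
    using assms(3) by (rule rtrancl_subset_rtrancl)
  then show ?thesis
    using assms(1,2) feasible_iff_reachable[OF \<open>s \<in> P\<close>] by blast
qed

lemma cost_fun_upd:
  assumes "finite P" "p \<in> P"
  shows "cost \<alpha> P (rho(p := a)) = cost \<alpha> P rho - rho p powr \<alpha> + a powr \<alpha>"
proof -
  have "cost \<alpha> P (rho(p := a)) = a powr \<alpha> + (\<Sum>x \<in> P - {p}. rho x powr \<alpha>)"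
    unfolding cost_def using assms by (simp add: sum.remove)
  moreover have "cost \<alpha> P rho = rho p powr \<alpha> + (\<Sum>x \<in> P - {p}. rho x powr \<alpha>)"
    unfolding cost_def using assms by (simp add: sum.remove)
  ultimately show ?thesis
    by simp
qed

lemma cost_reroute_less:
  assumes "1 < \<alpha>" "finite P" "p \<in> P" "r \<in> P" "r \<noteq> p"
    and "0 < m" "m < h" "h \<le> rho p"
  shows "cost \<alpha> P (rho(p := m, r := max (rho r) (h - m))) < cost \<alpha> P rho"
proof -
  have "max (rho r) (h - m) powr \<alpha> \<le> rho r powr \<alpha> + (h - m) powr \<alpha>"
    by (simp add: max_def)
  moreover have "m powr \<alpha> + (h - m) powr \<alpha> < h powr \<alpha>"
    using powr_add_less_powr[of m "h - m" \<alpha>] assms by simp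
  moreover have "h powr \<alpha> \<le> rho p powr \<alpha>"
    using assms by (intro powr_mono2) auto
  ultimately show ?thesis
    using assms cost_fun_upd[of P p \<alpha> rho m] cost_fun_upd[of P r \<alpha> "rho(p := m)"] by simp
qed

lemma feasible_reroute:
  assumes "feasible P s rho" "p \<in> P" "r \<in> P" "r \<noteq> p" "0 \<le> m" "circ_dist p r \<le> m"
    and "\<And>x. x \<in> P \<Longrightarrow> circ_dist p x \<le> m \<or> circ_dist r x \<le> c"
  shows "feasible P s (rho(p := m, r := max (rho r) c))" (is "feasible P s ?rho'")
proof (rule feasible_if_edges_reachable[OF assms(1)])
  show "range_assignment P ?rho'"
    using assms(1,3,5) unfolding feasible_def range_assignment_def by (simp add: le_max_iff_disj)
  show "induced_edges P rho \<subseteq> (induced_edges P ?rho')\<^sup>*"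
  proof
    fix e
    assume "e \<in> induced_edges P rho"
    then obtain a b where e: "e = (a, b)" "a \<in> P" "b \<in> P" "a \<noteq> b" "circ_dist a b \<le> rho a"
      unfolding induced_edges_def by blast
    show "e \<in> (induced_edges P ?rho')\<^sup>*"
    proof (cases "a = p \<and> circ_dist p b > m")
      case True
      then have "(p, r) \<in> induced_edges P ?rho'" "(r, b) \<in> induced_edges P ?rho'"
        using assms(2-6) assms(7)[of b] e unfolding induced_edges_def by auto
      then show ?thesis
        using True e(1) by auto
    next
      case False
      then have "e \<in> induced_edges P ?rho'"
        using assms(4) e unfolding induced_edges_def by auto
      then show ?thesis
        by auto
    qed
  qed
qed

theorem lemma13:
  fixes P :: "real set" and s \<alpha> :: real and rho :: "real \<Rightarrow> real"
  assumes "\<alpha> > 1"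
    and "finite P" and "P \<subseteq> {0..<1}" and "s \<in> P" and "card P > 2"
    and "optimal \<alpha> P s rho"
  shows "\<forall>p \<in> P. rho p < 1/2"
proof (rule ccontr)
  assume "\<not> (\<forall>p \<in> P. rho p < 1/2)"
  then obtain p where p: "p \<in> P" "1/2 \<le> rho p"
    by force
  obtain r where r: "r \<in> P" "r \<noteq> p" "0 < circ_dist p r" "circ_dist p r < 1/2"
    and covered: "\<And>x. x \<in> P \<Longrightarrow>
      circ_dist p x \<le> circ_dist p r \<or> circ_dist r x \<le> 1/2 - circ_dist p r"
    using farthest_non_antipodal_point[OF assms(2,3) p(1) assms(5)] by blast
  define m where "m = circ_dist p r"
  define rho' where "rho' = rho(p := m, r := max (rho r) (1/2 - m))"
  have "feasible P s rho'"
    unfolding rho'_def m_def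
    using assms(6) p(1) r(1-3) covered by (intro feasible_reroute) (auto simp: optimal_def)
  then have "cost \<alpha> P rho \<le> cost \<alpha> P rho'"
    using assms(6) unfolding optimal_def by blast
  moreover have "cost \<alpha> P rho' < cost \<alpha> P rho"
    unfolding rho'_def using assms(1,2) p r m_def by (intro cost_reroute_less) auto
  ultimately show False
    by simp
qed

end
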